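(* For all integers $m\ge1$ and $n\ge1$, $$\sum_{k=1}^n k\binom{m+k-1}{k}^{-1}\binom{2m+k-1}{k}=\frac{[n(m+1)-m+1](m+n)}{(m+1)(m+2)}\binom{m+n}{n+1}^{-1}\binom{2m+n}{n+1}+\frac{2m(m-1)}{(m+1)(m+2)}.$$ *)

theory Defs
  imports Complex_Main
begin

end

theory Submission
  imports Defs
begin

text \<open>Writing \<open>r k\<close> for the ratio \<open>C(2m+k-1,k) / C(m+k-1,k)\<close>, one has
  \<open>r (k+1) = r k \<cdot> (2m+k)/(m+k)\<close>. Hence the right-hand side, as a function \<open>G n \<cdot> r (n+1) + c\<close>
  of \<open>n\<close>, increases by exactly \<open>(n+1) \<cdot> r (n+1)\<close> from \<open>n\<close> to \<open>n+1\<close>; this reduces to a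
  polynomial identity in \<open>m\<close> and \<open>n\<close>. At \<open>n = 0\<close> both sides vanish, since \<open>r 1 = 2\<close>.\<close>

lemma real_binomial_absorption:
  fixes a k :: nat
  assumes "a \<ge> 1"
  shows "real ((a + k) choose Suc k) = real (a + k) / real (Suc k) * real ((a + k - 1) choose k)"
proof -
  obtain b where b: "a + k = Suc b" using assms by (cases "a + k") auto
  have "real (Suc b) * real (b choose k) = real (Suc b choose Suc k) * real (Suc k)"
    using Suc_times_binomial_eq[of b k] by (simp only: of_nat_mult[symmetric])
  then show ?thesis unfolding b by (simp add: field_simps)
qed

definition binomial_ratio :: "nat \<Rightarrow> nat \<Rightarrow> real" where
  "binomial_ratio m k = real ((2*m + k - 1) choose k) / real ((m + k - 1) choose k)"

lemma binomial_ratio_one: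
  assumes "m \<ge> 1"
  shows "binomial_ratio m 1 = 2"
  using assms by (simp add: binomial_ratio_def)

lemma binomial_ratio_Suc:
  assumes "m \<ge> 1"
  shows "binomial_ratio m (Suc k) = binomial_ratio m k * real (2*m + k) / real (m + k)"
proof -
  define A where "A = real ((2*m + k - 1) choose k)"
  define B where "B = real ((m + k - 1) choose k)"
  have "2*m + Suc k - 1 = 2*m + k" "m + Suc k - 1 = m + k" using assms by auto
  then have "binomial_ratio m (Suc k)
      = (real (2*m + k) / real (Suc k) * A) / (real (m + k) / real (Suc k) * B)"
    unfolding binomial_ratio_def A_def B_def
    using real_binomial_absorption[of "2*m" k] real_binomial_absorption[of m k] assms by simp
  also have "\<dots> = A / B * real (2*m + k) / real (m + k)"
    by (simp add: ac_simps)
  finally show ?thesis unfolding binomial_ratio_def A_def B_def .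
qed

definition sum_coefficient :: "real \<Rightarrow> real \<Rightarrow> real" where
  "sum_coefficient x y = (y*(x+1) - x + 1) * (x+y) / ((x+1)*(x+2))"

lemma sum_coefficient_step:
  fixes x y :: real
  assumes "x \<ge> 0" "y \<ge> 0"
  shows "sum_coefficient x y + (y+1) = sum_coefficient x (y+1) * (2*x+y+1) / (x+y+1)"
proof -
  have D: "(x+1)*(x+2) > 0" using assms by simp
  have "sum_coefficient x y + (y+1)
      = ((y*(x+1) - x + 1) * (x+y) + (y+1) * ((x+1)*(x+2))) / ((x+1)*(x+2))"
    using D by (simp add: sum_coefficient_def field_simps)
  also have "\<dots> = ((y+1)*(x+1) - x + 1) * (2*x+y+1) / ((x+1)*(x+2))"
    by (simp add: algebra_simps)
  also have "\<dots> = sum_coefficient x (y+1) * (2*x+y+1) / (x+y+1)"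
    using assms by (simp add: sum_coefficient_def add.assoc)
  finally show ?thesis .
qed

lemma sum_weighted_binomial_ratio:
  fixes m n :: nat
  assumes "m \<ge> 1"
  shows "(\<Sum>k=1..n. real k * binomial_ratio m k)
    = sum_coefficient (real m) (real n) * binomial_ratio m (n+1)
      + 2 * real m * (real m - 1) / ((real m + 1) * (real m + 2))"
proof (induction n)
  case 0
  have "(real m + 1) * (real m + 2) > 0" by simp
  then show ?case using binomial_ratio_one[OF assms] by (simp add: sum_coefficient_def field_simps)
next
  case (Suc n)
  have "(\<Sum>k=1..Suc n. real k * binomial_ratio m k)
      = (sum_coefficient (real m) (real n) + real (Suc n)) * binomial_ratio m (Suc n)
        + 2 * real m * (real m - 1) / ((real m + 1) * (real m + 2))"
    using Suc.IH by (simp add: distrib_right)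
  also have "sum_coefficient (real m) (real n) + real (Suc n)
      = sum_coefficient (real m) (real (Suc n)) * real (2*m + Suc n) / real (m + Suc n)"
    using sum_coefficient_step[of "real m" "real n"] by (simp add: add_ac)
  finally show ?case
    using binomial_ratio_Suc[OF assms, of "Suc n"] by simp
qed

theorem mainTheorem11:
  fixes m n :: nat
  assumes "m \<ge> 1" and "n \<ge> 1"
  shows "(\<Sum>k=1..n. real k * real ((2*m+k-1) choose k) / real ((m+k-1) choose k))
    = (real n * (real m + 1) - real m + 1) * (real m + real n) / ((real m + 1) * (real m + 2))
        * real ((2*m+n) choose (n+1)) / real ((m+n) choose (n+1))
      + 2 * real m * (real m - 1) / ((real m + 1) * (real m + 2))"
  using sum_weighted_binomial_ratio[OF assms(1), of n]
  by (simp add: binomial_ratio_def sum_coefficient_def)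

end
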